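(* Let $A$ be a finite subset of an abelian group. Then $$\mathsf{E}(A+A)\geq |A-A|^{-1}\,|A\times A+\Delta(A)|^2\geq |A|^2\max\{|A-A|,|A+A|\},$$ $$\mathsf{E}(A-A)\geq |A-A|^{-1}\,|A\times A-\Delta(A)|^2\geq |A|^2|A-A|,$$ and $$\mathsf{E}(A\pm A)\geq \frac{|A|^{12}}{\mathsf{E}_3(A)^2\,|A-A|},$$ the last inequality holding both for $A+A$ and for $A-A$.
   Context: For a finite set $X$ in an abelian group (written additively), $\mathsf{E}(X)$ is the additive energy, the number of solutions of $x_1-x_2=x_3-x_4$ with $x_i\in X$. For $y$ in the group let $r_{A-A}(y)=|\{(a,b)\in A\times A:a-b=y\}|$ and $\mathsf{E}_3(A)=\sum_y r_{A-A}(y)^3$. $A\pm A=\{a\pm b: a,b\in A\}$. $\Delta(A)=\{(a,a):a\in A\}$, $A\times A+\Delta(A)=\{(a_1+a,a_2+a):a,a_1,a_2\in A\}$ and $A\times A-\Delta(A)=\{(a_1-a,a_2-a):a,a_1,a_2\in A\}$. *)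

theory Defs
  imports "HOL-Analysis.Analysis"
begin

definition sumset :: "'a::ab_group_add set \<Rightarrow> 'a set \<Rightarrow> 'a set" where
  "sumset A B = {a + b | a b. a \<in> A \<and> b \<in> B}"

definition diffset :: "'a::ab_group_add set \<Rightarrow> 'a set \<Rightarrow> 'a set" where
  "diffset A B = {a - b | a b. a \<in> A \<and> b \<in> B}"

definition add_energy :: "'a::ab_group_add set \<Rightarrow> nat" where
  "add_energy X = card {(x1, x2, x3, x4). x1 \<in> X \<and> x2 \<in> X \<and> x3 \<in> X \<and> x4 \<in> X \<and> x1 - x2 = x3 - x4}"

definition r_diff :: "'a::ab_group_add set \<Rightarrow> 'a \<Rightarrow> nat" where
  "r_diff A y = card {(a, b). a \<in> A \<and> b \<in> A \<and> a - b = y}"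

text \<open>E_3(A) = sum over y of r_{A-A}(y)^3; terms vanish outside A-A.\<close>
definition E3 :: "'a::ab_group_add set \<Rightarrow> nat" where
  "E3 A = (\<Sum>y\<in>diffset A A. r_diff A y ^ 3)"

definition AxA_plus_Delta :: "'a::ab_group_add set \<Rightarrow> ('a \<times> 'a) set" where
  "AxA_plus_Delta A = {(a1 + a, a2 + a) | a a1 a2. a \<in> A \<and> a1 \<in> A \<and> a2 \<in> A}"

definition AxA_minus_Delta :: "'a::ab_group_add set \<Rightarrow> ('a \<times> 'a) set" where
  "AxA_minus_Delta A = {(a1 - a, a2 - a) | a a1 a2. a \<in> A \<and> a1 \<in> A \<and> a2 \<in> A}"

end

theory Submission
  imports Defs
begin

text \<open>Let \<open>P = A \<times> A + \<Delta>(A)\<close>. It lies in \<open>(A+A) \<times> (A+A)\<close> and all differences \<open>s - t\<close>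
  of its pairs lie in \<open>A - A\<close>, so Cauchy--Schwarz over the fibres of the difference map gives
  \<open>\<^bold>E(A+A) \<ge> |P|\<^sup>2 / |A-A|\<close>. The fibre of \<open>P\<close> over a difference \<open>d\<close>, and the fibre over a
  first coordinate \<open>s\<close>, both contain a translate of \<open>A\<close>, so \<open>|P| \<ge> |A| max{|A-A|, |A+A|}\<close>.
  Finally, \<open>P\<close> is the image of \<open>A\<^sup>3\<close> under \<open>(a, a\<^sub>1, a\<^sub>2) \<mapsto> (a\<^sub>1 + a, a\<^sub>2 + a)\<close>, whose
  collisions are counted exactly by \<open>\<^bold>E\<^sub>3(A)\<close>; Cauchy--Schwarz again gives \<open>|A|\<^sup>6 \<le> |P| \<^bold>E\<^sub>3(A)\<close>.
  The same argument works for \<open>A \<times> A - \<Delta>(A)\<close> inside \<open>(A-A) \<times> (A-A)\<close>.\<close>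

definition collisions :: "('a \<Rightarrow> 'b) \<Rightarrow> 'a set \<Rightarrow> ('a \<times> 'a) set" where
  "collisions g X = {(x, y). x \<in> X \<and> y \<in> X \<and> g x = g y}"

lemma card_eq_sum_card_fibres:
  assumes "finite X"
  shows "card X = (\<Sum>d\<in>g ` X. card {x\<in>X. g x = d})"
  using sum.image_gen[OF assms, of "\<lambda>_. 1::nat" g] by simp

lemma card_collisions_eq_sum_squares:
  assumes "finite X"
  shows "card (collisions g X) = (\<Sum>d\<in>g ` X. card {x\<in>X. g x = d} ^ 2)"
proof -
  have fibres: "collisions g X = (\<Union>d\<in>g ` X. {x\<in>X. g x = d} \<times> {x\<in>X. g x = d})"
    unfolding collisions_def by auto
  show ?thesis
    unfolding fibres
    by (subst card_UN_disjoint) (use assms in \<open>auto simp: power2_eq_square card_cartesian_product\<close>)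
qed

lemma card_triple_collisions_eq_sum_cubes:
  assumes "finite X"
  shows "card {(x, y, z). x \<in> X \<and> y \<in> X \<and> z \<in> X \<and> g x = g y \<and> g y = g z}
           = (\<Sum>d\<in>g ` X. card {x\<in>X. g x = d} ^ 3)"
proof -
  have fibres: "{(x, y, z). x \<in> X \<and> y \<in> X \<and> z \<in> X \<and> g x = g y \<and> g y = g z}
          = (\<Union>d\<in>g ` X. {x\<in>X. g x = d} \<times> {x\<in>X. g x = d} \<times> {x\<in>X. g x = d})"
    by auto
  show ?thesis
    unfolding fibres
    by (subst card_UN_disjoint) (use assms in \<open>auto simp: power3_eq_cube card_cartesian_product mult.assoc\<close>)
qed

lemma card_sq_le_card_image_mult_card_collisions:
  assumes "finite X"
  shows "real (card X) ^ 2 \<le> real (card (g ` X)) * real (card (collisions g X))"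
proof -
  have "real (card X) ^ 2 = (\<Sum>d\<in>g ` X. real (card {x\<in>X. g x = d})) ^ 2"
    by (simp add: card_eq_sum_card_fibres[OF assms, of g])
  also have "\<dots> \<le> (\<Sum>d\<in>g ` X. real (card {x\<in>X. g x = d}) ^ 2) * card (g ` X)"
    by (rule sum_squared_le_sum_of_squares)
  also have "(\<Sum>d\<in>g ` X. real (card {x\<in>X. g x = d}) ^ 2) = real (card (collisions g X))"
    by (simp add: card_collisions_eq_sum_squares[OF assms])
  finally show ?thesis
    by (simp add: mult.commute)
qed

lemma card_sq_div_le_add_energy:
  fixes S :: "'a::ab_group_add set"
  assumes "finite S" and "P \<subseteq> S \<times> S" and "finite D" and "(\<lambda>(s, t). s - t) ` P \<subseteq> D"
  shows "real (card P) ^ 2 / real (card D) \<le> real (add_energy S)"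
proof (cases "P = {}")
  case True
  then show ?thesis by simp
next
  case False
  let ?diff = "\<lambda>(s, t). s - t :: 'a"
  let ?Q = "{(x1, x2, x3, x4). x1 \<in> S \<and> x2 \<in> S \<and> x3 \<in> S \<and> x4 \<in> S \<and> x1 - x2 = x3 - x4}"
  have "finite P"
    using assms(1,2) finite_subset by blast
  have "?Q \<subseteq> S \<times> S \<times> S \<times> S"
    by auto
  then have "card (collisions ?diff P) \<le> card ?Q"
    using assms(1,2)
    by (intro card_inj_on_le[where f = "\<lambda>((s, t), (u, v)). (s, t, u, v)"])
       (auto simp: inj_on_def collisions_def intro: finite_subset)
  then have collisions_le: "card (collisions ?diff P) \<le> add_energy S"
    by (simp add: add_energy_def)
  have image_pos: "card (?diff ` P) > 0"
    using False \<open>finite P\<close> by (simp add: card_gt_0_iff)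
  have "card (?diff ` P) \<le> card D"
    using assms(3,4) card_mono by blast
  then have "real (card P) ^ 2 / real (card D) \<le> real (card P) ^ 2 / real (card (?diff ` P))"
    using image_pos by (intro divide_left_mono) auto
  also have "\<dots> \<le> real (card (collisions ?diff P))"
    using card_sq_le_card_image_mult_card_collisions[OF \<open>finite P\<close>, of ?diff] image_pos
    by (simp add: divide_le_eq mult.commute)
  also have "\<dots> \<le> real (add_energy S)"
    using collisions_le by simp
  finally show ?thesis .
qed

lemma card_ge_mult_card_of_fibres_ge:
  assumes "finite X" and "finite B" and "\<And>b. b \<in> B \<Longrightarrow> k \<le> card {x\<in>X. g x = b}"
  shows "k * card B \<le> card X"
proof -
  have "k * card B \<le> (\<Sum>b\<in>B. card {x\<in>X. g x = b})"
    using sum_mono[of B "\<lambda>_. k", OF assms(3)] by (simp add: mult.commute)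
  also have "\<dots> = card (\<Union>b\<in>B. {x\<in>X. g x = b})"
    using assms(1,2) by (simp add: card_UN_disjoint disjoint_iff)
  also have "\<dots> \<le> card X"
    using assms(1) by (intro card_mono) auto
  finally show ?thesis .
qed

lemma AxA_plus_Delta_eq_image:
  "AxA_plus_Delta A = (\<lambda>(a, a1, a2). (a1 + a, a2 + a)) ` (A \<times> A \<times> A)"
  unfolding AxA_plus_Delta_def by (auto simp: image_def)

lemma AxA_minus_Delta_eq_image:
  "AxA_minus_Delta A = (\<lambda>(a, a1, a2). (a1 - a, a2 - a)) ` (A \<times> A \<times> A)"
  unfolding AxA_minus_Delta_def by (auto simp: image_def)

lemma finite_sumset: "finite A \<Longrightarrow> finite (sumset A A)"
  and finite_diffset: "finite A \<Longrightarrow> finite (diffset A A)"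
proof -
  have "sumset A A = (\<lambda>(a, b). a + b) ` (A \<times> A)" "diffset A A = (\<lambda>(a, b). a - b) ` (A \<times> A)"
    unfolding sumset_def diffset_def by auto
  then show "finite A \<Longrightarrow> finite (sumset A A)" "finite A \<Longrightarrow> finite (diffset A A)"
    by simp_all
qed

lemma finite_AxA_plus_Delta: "finite A \<Longrightarrow> finite (AxA_plus_Delta A)"
  and finite_AxA_minus_Delta: "finite A \<Longrightarrow> finite (AxA_minus_Delta A)"
  by (simp_all add: AxA_plus_Delta_eq_image AxA_minus_Delta_eq_image)

lemma AxA_plus_Delta_subset: "AxA_plus_Delta A \<subseteq> sumset A A \<times> sumset A A"
  and diff_AxA_plus_Delta_subset: "(\<lambda>(s, t). s - t) ` AxA_plus_Delta A \<subseteq> diffset A A"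
  unfolding AxA_plus_Delta_def sumset_def diffset_def by auto blast+

lemma AxA_minus_Delta_subset: "AxA_minus_Delta A \<subseteq> diffset A A \<times> diffset A A"
  and diff_AxA_minus_Delta_subset: "(\<lambda>(s, t). s - t) ` AxA_minus_Delta A \<subseteq> diffset A A"
  unfolding AxA_minus_Delta_def diffset_def by auto blast+

lemma card_AxA_plus_Delta_ge_diffset:
  assumes "finite A"
  shows "card A * card (diffset A A) \<le> card (AxA_plus_Delta A)"
proof (rule card_ge_mult_card_of_fibres_ge[where g = "\<lambda>(s, t). s - t"])
  fix d assume "d \<in> diffset A A"
  then obtain x y where "x \<in> A" "y \<in> A" "d = x - y"
    unfolding diffset_def by blast
  then have "(x + a, y + a) \<in> AxA_plus_Delta A" if "a \<in> A" for a
    unfolding AxA_plus_Delta_def using that by blast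
  then show "card A \<le> card {p \<in> AxA_plus_Delta A. (\<lambda>(s, t). s - t) p = d}"
    using assms \<open>d = x - y\<close> by (intro card_inj_on_le[where f = "\<lambda>a. (x + a, y + a)"])
      (auto simp: finite_AxA_plus_Delta inj_on_def)
qed (simp_all add: assms finite_AxA_plus_Delta finite_diffset)

lemma card_AxA_plus_Delta_ge_sumset:
  assumes "finite A"
  shows "card A * card (sumset A A) \<le> card (AxA_plus_Delta A)"
proof (rule card_ge_mult_card_of_fibres_ge[where g = fst])
  fix s assume "s \<in> sumset A A"
  then obtain x y where "x \<in> A" "y \<in> A" "s = x + y"
    unfolding sumset_def by blast
  then have "(s, b + y) \<in> AxA_plus_Delta A" if "b \<in> A" for b
    unfolding AxA_plus_Delta_def using that by (force simp: add.commute)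
  then show "card A \<le> card {p \<in> AxA_plus_Delta A. fst p = s}"
    using assms by (intro card_inj_on_le[where f = "\<lambda>b. (s, b + y)"])
      (auto simp: finite_AxA_plus_Delta inj_on_def)
qed (simp_all add: assms finite_AxA_plus_Delta finite_sumset)

lemma card_AxA_minus_Delta_ge_diffset:
  assumes "finite A"
  shows "card A * card (diffset A A) \<le> card (AxA_minus_Delta A)"
proof (rule card_ge_mult_card_of_fibres_ge[where g = "\<lambda>(s, t). s - t"])
  fix d assume "d \<in> diffset A A"
  then obtain x y where "x \<in> A" "y \<in> A" "d = x - y"
    unfolding diffset_def by blast
  then have "(x - a, y - a) \<in> AxA_minus_Delta A" if "a \<in> A" for a
    unfolding AxA_minus_Delta_def using that by blast
  then show "card A \<le> card {p \<in> AxA_minus_Delta A. (\<lambda>(s, t). s - t) p = d}"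
    using assms \<open>d = x - y\<close> by (intro card_inj_on_le[where f = "\<lambda>a. (x - a, y - a)"])
      (auto simp: finite_AxA_minus_Delta inj_on_def)
qed (simp_all add: assms finite_AxA_minus_Delta finite_diffset)

lemma E3_eq_card_diff_triples:
  fixes A :: "'a::ab_group_add set"
  assumes "finite A"
  shows "E3 A = card {((a, b), (c, d), (e, f)). a \<in> A \<and> b \<in> A \<and> c \<in> A \<and> d \<in> A \<and> e \<in> A \<and> f \<in> A
                        \<and> a - b = c - d \<and> c - d = e - f}"
proof -
  let ?diff = "\<lambda>(x, y). x - y :: 'a"
  have "?diff ` (A \<times> A) = diffset A A"
    unfolding diffset_def by auto
  moreover have "r_diff A d = card {p \<in> A \<times> A. ?diff p = d}" for d
    unfolding r_diff_def by (intro arg_cong[where f = card]) auto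
  ultimately have "E3 A = (\<Sum>d\<in>?diff ` (A \<times> A). card {p \<in> A \<times> A. ?diff p = d} ^ 3)"
    by (simp add: E3_def)
  also have "\<dots> = card {(p, q, r). p \<in> A \<times> A \<and> q \<in> A \<times> A \<and> r \<in> A \<times> A
                                \<and> ?diff p = ?diff q \<and> ?diff q = ?diff r}"
    using assms by (intro card_triple_collisions_eq_sum_cubes[symmetric]) simp
  also have "{(p, q, r). p \<in> A \<times> A \<and> q \<in> A \<times> A \<and> r \<in> A \<times> A \<and> ?diff p = ?diff q \<and> ?diff q = ?diff r}
      = {((a, b), (c, d), (e, f)). a \<in> A \<and> b \<in> A \<and> c \<in> A \<and> d \<in> A \<and> e \<in> A \<and> f \<in> A
           \<and> a - b = c - d \<and> c - d = e - f}"
    by auto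
  finally show ?thesis .
qed

lemma add_eq_add_iff_diff_eq:
  fixes x y a b :: "'a::ab_group_add"
  shows "x + a = y + b \<longleftrightarrow> b - a = x - y"
  by (auto simp: algebra_simps)

lemma diff_eq_diff_iff_add_eq_add:
  fixes x y a b :: "'a::ab_group_add"
  shows "x - a = y - b \<longleftrightarrow> x + b = y + a"
  by (auto simp: algebra_simps)

text \<open>A collision \<open>(a\<^sub>1 + a, a\<^sub>2 + a) = (b\<^sub>1 + b, b\<^sub>2 + b)\<close> is a triple of pairs
  \<open>(b, a), (a\<^sub>1, b\<^sub>1), (a\<^sub>2, b\<^sub>2)\<close> with a common difference.\<close>

lemma card_collisions_AxA_plus_Delta_map:
  fixes A :: "'a::ab_group_add set"
  assumes "finite A"
  shows "card (collisions (\<lambda>(a, a1, a2). (a1 + a, a2 + a)) (A \<times> A \<times> A)) = E3 A"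
proof -
  have "bij_betw (\<lambda>((a, a1, a2), (b, b1, b2)). ((b, a), (a1, b1), (a2, b2)))
          (collisions (\<lambda>(a, a1, a2). (a1 + a, a2 + a)) (A \<times> A \<times> A))
          {((a, b), (c, d), (e, f)). a \<in> A \<and> b \<in> A \<and> c \<in> A \<and> d \<in> A \<and> e \<in> A \<and> f \<in> A
             \<and> a - b = c - d \<and> c - d = e - f}"
    by (rule bij_betw_byWitness[where f' = "\<lambda>((b, a), (a1, b1), (a2, b2)). ((a, a1, a2), (b, b1, b2))"])
      (auto simp: collisions_def add_eq_add_iff_diff_eq)
  then show ?thesis
    using E3_eq_card_diff_triples[OF assms] by (simp add: bij_betw_same_card)
qed

text \<open>Exchanging the translation parameters \<open>a, b\<close> turns collisions of the difference map into
  collisions of the sum map, as \<open>a\<^sub>1 - a = b\<^sub>1 - b \<longleftrightarrow> a\<^sub>1 + b = b\<^sub>1 + a\<close>.\<close>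

lemma card_collisions_AxA_minus_Delta_map:
  fixes A :: "'a::ab_group_add set"
  assumes "finite A"
  shows "card (collisions (\<lambda>(a, a1, a2). (a1 - a, a2 - a)) (A \<times> A \<times> A)) = E3 A"
proof -
  have "bij_betw (\<lambda>((a, a1, a2), (b, b1, b2)). ((b, a1, a2), (a, b1, b2)))
          (collisions (\<lambda>(a, a1, a2). (a1 - a, a2 - a)) (A \<times> A \<times> A))
          (collisions (\<lambda>(a, a1, a2). (a1 + a, a2 + a)) (A \<times> A \<times> A))"
    by (rule bij_betw_byWitness[where f' = "\<lambda>((b, a1, a2), (a, b1, b2)). ((a, a1, a2), (b, b1, b2))"])
      (auto simp: collisions_def diff_eq_diff_iff_add_eq_add)
  then show ?thesis
    using card_collisions_AxA_plus_Delta_map[OF assms] by (simp add: bij_betw_same_card)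
qed

lemma card_pow6_le_card_image_mult_E3:
  fixes A :: "'a::ab_group_add set" and g :: "'a \<times> 'a \<times> 'a \<Rightarrow> 'b"
  assumes "finite A" and "card (collisions g (A \<times> A \<times> A)) = E3 A"
  shows "real (card A) ^ 6 \<le> real (card (g ` (A \<times> A \<times> A))) * real (E3 A)"
  using card_sq_le_card_image_mult_card_collisions[of "A \<times> A \<times> A" g] assms
  by (simp add: card_cartesian_product power_mult_distrib flip: power_mult)

lemma card_pow6_le_card_AxA_plus_Delta_mult_E3:
  assumes "finite A"
  shows "real (card A) ^ 6 \<le> real (card (AxA_plus_Delta A)) * real (E3 A)"
  using card_pow6_le_card_image_mult_E3[OF assms card_collisions_AxA_plus_Delta_map[OF assms]]
  by (simp add: AxA_plus_Delta_eq_image)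

lemma card_pow6_le_card_AxA_minus_Delta_mult_E3:
  assumes "finite A"
  shows "real (card A) ^ 6 \<le> real (card (AxA_minus_Delta A)) * real (E3 A)"
  using card_pow6_le_card_image_mult_E3[OF assms card_collisions_AxA_minus_Delta_map[OF assms]]
  by (simp add: AxA_minus_Delta_eq_image)

lemma sq_mult_le_sq_div:
  fixes p d m x :: real
  assumes "x * d \<le> p" and "x * m \<le> p" and "0 \<le> x" and "0 < d" and "0 \<le> m"
  shows "x ^ 2 * m \<le> p ^ 2 / d"
proof -
  have "0 \<le> x * m"
    using assms(3,5) by simp
  then have "(x * d) * (x * m) \<le> p * p"
    using assms(1,2) by (intro mult_mono) auto
  then show ?thesis
    using assms(4) by (simp add: le_divide_eq power2_eq_square algebra_simps)
qed

lemma pow12_div_le_of_sq_div_le: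
  fixes p d x e E :: real
  assumes "p ^ 2 / d \<le> E" and "x ^ 6 \<le> p * e" and "0 \<le> x" and "0 < d" and "0 \<le> e"
  shows "x ^ 12 / (e ^ 2 * d) \<le> E"
proof (cases "e = 0")
  case True
  then show ?thesis
    using assms(1,4) by simp (meson divide_nonneg_pos order.trans zero_le_power2)
next
  case False
  then have "0 < e"
    using assms(5) by simp
  then have "(x ^ 6 / e) ^ 2 \<le> p ^ 2"
    using assms(2,3) by (intro power_mono) (simp_all add: divide_le_eq)
  then have "x ^ 12 / e ^ 2 / d \<le> p ^ 2 / d"
    using assms(4) by (intro divide_right_mono) (simp_all add: power_divide flip: power_mult)
  then show ?thesis
    using assms(1) by (simp add: divide_divide_eq_left)
qed

theorem corollary5p6:
  fixes A :: "'a::ab_group_add set"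
  assumes "finite A"
  shows "(real (add_energy (sumset A A))
            \<ge> real (card (AxA_plus_Delta A)) ^ 2 / real (card (diffset A A))
          \<and> real (card (AxA_plus_Delta A)) ^ 2 / real (card (diffset A A))
            \<ge> real (card A) ^ 2 * max (real (card (diffset A A))) (real (card (sumset A A))))
       \<and> (real (add_energy (diffset A A))
            \<ge> real (card (AxA_minus_Delta A)) ^ 2 / real (card (diffset A A))
          \<and> real (card (AxA_minus_Delta A)) ^ 2 / real (card (diffset A A))
            \<ge> real (card A) ^ 2 * real (card (diffset A A)))
       \<and> (real (add_energy (sumset A A))
            \<ge> real (card A) ^ 12 / (real (E3 A) ^ 2 * real (card (diffset A A)))
          \<and> real (add_energy (diffset A A))
            \<ge> real (card A) ^ 12 / (real (E3 A) ^ 2 * real (card (diffset A A))))"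
proof (cases "A = {}")
  case True
  then show ?thesis
    by (simp add: sumset_def diffset_def AxA_plus_Delta_def AxA_minus_Delta_def)
next
  case False
  let ?a = "real (card A)" and ?D = "real (card (diffset A A))" and ?S = "real (card (sumset A A))"
  let ?P = "real (card (AxA_plus_Delta A))" and ?M = "real (card (AxA_minus_Delta A))"
  have "0 < ?D"
    using False assms finite_diffset unfolding diffset_def by (auto simp: card_gt_0_iff)
  have energy_plus: "?P ^ 2 / ?D \<le> real (add_energy (sumset A A))"
    using assms by (intro card_sq_div_le_add_energy AxA_plus_Delta_subset diff_AxA_plus_Delta_subset
        finite_sumset finite_diffset)
  have energy_minus: "?M ^ 2 / ?D \<le> real (add_energy (diffset A A))"
    using assms by (intro card_sq_div_le_add_energy AxA_minus_Delta_subset diff_AxA_minus_Delta_subset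
        finite_diffset)
  have "?a * ?D \<le> ?P" "?a * ?S \<le> ?P" "?a * ?D \<le> ?M"
    using card_AxA_plus_Delta_ge_diffset[OF assms] card_AxA_plus_Delta_ge_sumset[OF assms]
      card_AxA_minus_Delta_ge_diffset[OF assms]
    by (simp_all flip: of_nat_mult)
  then have "?a ^ 2 * max ?D ?S \<le> ?P ^ 2 / ?D" "?a ^ 2 * ?D \<le> ?M ^ 2 / ?D"
    using \<open>0 < ?D\<close> by (auto intro: sq_mult_le_sq_div simp: max_def)
  moreover have "?a ^ 12 / (real (E3 A) ^ 2 * ?D) \<le> real (add_energy (sumset A A))"
    "?a ^ 12 / (real (E3 A) ^ 2 * ?D) \<le> real (add_energy (diffset A A))"
    using pow12_div_le_of_sq_div_le[OF energy_plus card_pow6_le_card_AxA_plus_Delta_mult_E3[OF assms]]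
      pow12_div_le_of_sq_div_le[OF energy_minus card_pow6_le_card_AxA_minus_Delta_mult_E3[OF assms]]
      \<open>0 < ?D\<close> by simp_all
  ultimately show ?thesis
    using energy_plus energy_minus by simp
qed

end
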